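(* Let $\mathsf E$ be a non-trivial observable on $\mathcal H_S$. No $\mathsf E$-instrument implemented by a measurement scheme constrained by the third law is repeatable.
   Context: All Hilbert spaces are finite-dimensional and complex. A state is a positive operator of unit trace; it is full-rank if it is positive definite. A channel is a completely positive trace-preserving linear map. A channel is constrained by the third law if it maps every full-rank state on its input space to a full-rank state on its output space. Let $2\le\dim\mathcal H_S<\infty$. An observable is a finite family $\mathsf E=\{\mathsf E_x\}_{x\in\mathcal X}$ of nonzero operators with $0\le\mathsf E_x\le\mathbb 1$ and $\sum_x\mathsf E_x=\mathbb 1$. It is non-trivial if some $\mathsf E_x$ is not a multiple of $\mathbb 1$. An $\mathsf E$-instrument is a family $\{\mathcal I_x\}_{x\in\mathcal X}$ of completely positive maps on $\mathcal L(\mathcal H_S)$ with $\mathrm{tr}[\mathcal I_x(\rho)]=\mathrm{tr}[\mathsf E_x\rho]$ for all $x$ and all states $\rho$. A measurement scheme $(\mathcal H_A,\xi,\mathcal E,\mathsf Z)$ consists of: - a finite-dimensional $\mathcal H_A$; - a state $\xi$ on $\mathcal H_A$; - a channel $\mathcal E$ on $\mathcal L(\mathcal H_S\otimes\mathcal H_A)$; - positive operators $\{\mathsf Z_x\}_{x\in\mathcal X}$ on $\mathcal H_A$ summing to $\mathbb 1$. It implements $\mathcal I_x(\rho)=\mathrm{tr}_A[(\mathbb 1\otimes\mathsf Z_x)\mathcal E(\rho\otimes\xi)]$. It is constrained by the third law if $\xi$ is full-rank and $\mathcal E$ is constrained by the third law. An $\mathsf E$-instrument is repeatable if $\mathrm{tr}[\mathsf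 E_y\mathcal I_x(\rho)]=\delta_{x,y}\mathrm{tr}[\mathsf E_x\rho]$ for all outcomes $x,y$ and all states $\rho$. *)

theory Defs
  imports Complex_Main
begin

text \<open>Operators on a finite-dimensional Hilbert space with orthonormal basis indexed
  by the finite type 'n are represented as complex matrices 'n => 'n => complex.\<close>

type_synonym 'n op = "'n \<Rightarrow> 'n \<Rightarrow> complex"

definition idop :: "'n op" where
  "idop = (\<lambda>i j. if i = j then 1 else 0)"

definition trace :: "('n::finite) op \<Rightarrow> complex" where
  "trace A = (\<Sum>i\<in>UNIV. A i i)"

definition mmult :: "('n::finite) op \<Rightarrow> 'n op \<Rightarrow> 'n op" where
  "mmult A B = (\<lambda>i j. \<Sum>k\<in>UNIV. A i k * B k j)"

definition sesq :: "('n::finite \<Rightarrow> complex) \<Rightarrow> 'n op \<Rightarrow> ('n \<Rightarrow> complex) \<Rightarrow> complex" where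
  "sesq u A w = (\<Sum>i\<in>UNIV. \<Sum>j\<in>UNIV. cnj (u i) * A i j * w j)"

definition positive_op :: "('n::finite) op \<Rightarrow> bool" where
  "positive_op A \<longleftrightarrow> (\<forall>v. Im (sesq v A v) = 0 \<and> 0 \<le> Re (sesq v A v))"

definition posdef_op :: "('n::finite) op \<Rightarrow> bool" where
  "posdef_op A \<longleftrightarrow> positive_op A \<and> (\<forall>v. v \<noteq> (\<lambda>_. 0) \<longrightarrow> 0 < Re (sesq v A v))"

definition is_state :: "('n::finite) op \<Rightarrow> bool" where
  "is_state \<rho> \<longleftrightarrow> positive_op \<rho> \<and> trace \<rho> = 1"

definition full_rank_state :: "('n::finite) op \<Rightarrow> bool" where
  "full_rank_state \<rho> \<longleftrightarrow> is_state \<rho> \<and> posdef_op \<rho>"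

definition clinear_map :: "('a op \<Rightarrow> 'b op) \<Rightarrow> bool" where
  "clinear_map \<Phi> \<longleftrightarrow> (\<forall>A B c. \<Phi> (\<lambda>i j. c * A i j + B i j) = (\<lambda>i j. c * \<Phi> A i j + \<Phi> B i j))"

text \<open>A k x k block matrix with blocks M p q (p, q < k) is positive, i.e. positivity
  on the space C^k tensor H.\<close>
definition block_positive :: "nat \<Rightarrow> (nat \<Rightarrow> nat \<Rightarrow> ('n::finite) op) \<Rightarrow> bool" where
  "block_positive k M \<longleftrightarrow>
     (\<forall>v :: nat \<Rightarrow> 'n \<Rightarrow> complex.
        Im (\<Sum>p<k. \<Sum>q<k. sesq (v p) (M p q) (v q)) = 0 \<and>
        0 \<le> Re (\<Sum>p<k. \<Sum>q<k. sesq (v p) (M p q) (v q)))"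

text \<open>completely positive: linear and id_k tensor Phi is positive for every k\<close>
definition cp_map :: "(('a::finite) op \<Rightarrow> ('b::finite) op) \<Rightarrow> bool" where
  "cp_map \<Phi> \<longleftrightarrow> clinear_map \<Phi> \<and>
     (\<forall>k M. block_positive k M \<longrightarrow> block_positive k (\<lambda>p q. \<Phi> (M p q)))"

definition channel :: "(('a::finite) op \<Rightarrow> ('b::finite) op) \<Rightarrow> bool" where
  "channel \<Phi> \<longleftrightarrow> cp_map \<Phi> \<and> (\<forall>A. trace (\<Phi> A) = trace A)"

definition third_law_channel :: "(('a::finite) op \<Rightarrow> ('b::finite) op) \<Rightarrow> bool" where
  "third_law_channel \<Phi> \<longleftrightarrow> channel \<Phi> \<and> (\<forall>\<rho>. full_rank_state \<rho> \<longrightarrow> full_rank_state (\<Phi> \<rho>))"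

definition observable :: "('x::finite \<Rightarrow> ('n::finite) op) \<Rightarrow> bool" where
  "observable E \<longleftrightarrow>
     (\<forall>x. E x \<noteq> (\<lambda>_ _. 0) \<and> positive_op (E x) \<and> positive_op (\<lambda>i j. idop i j - E x i j)) \<and>
     (\<lambda>i j. \<Sum>x\<in>UNIV. E x i j) = idop"

definition nontrivial_observable :: "('x::finite \<Rightarrow> ('n::finite) op) \<Rightarrow> bool" where
  "nontrivial_observable E \<longleftrightarrow> (\<exists>x. \<not> (\<exists>c. E x = (\<lambda>i j. c * idop i j)))"

definition E_instrument :: "('x::finite \<Rightarrow> ('n::finite) op) \<Rightarrow> ('x \<Rightarrow> 'n op \<Rightarrow> 'n op) \<Rightarrow> bool" where
  "E_instrument E I \<longleftrightarrow> (\<forall>x. cp_map (I x)) \<and>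
     (\<forall>x \<rho>. is_state \<rho> \<longrightarrow> trace (I x \<rho>) = trace (mmult (E x) \<rho>))"

definition repeatable :: "('x::finite \<Rightarrow> ('n::finite) op) \<Rightarrow> ('x \<Rightarrow> 'n op \<Rightarrow> 'n op) \<Rightarrow> bool" where
  "repeatable E I \<longleftrightarrow> (\<forall>x y \<rho>. is_state \<rho> \<longrightarrow>
     trace (mmult (E y) (I x \<rho>)) = (if x = y then trace (mmult (E x) \<rho>) else 0))"

definition tensor_op :: "'s op \<Rightarrow> 'a op \<Rightarrow> ('s \<times> 'a) op" where
  "tensor_op A B = (\<lambda>(i, a) (j, b). A i j * B a b)"

definition ptrace_A :: "('s \<times> ('a::finite)) op \<Rightarrow> 's op" where
  "ptrace_A X = (\<lambda>i j. \<Sum>a\<in>UNIV. X (i, a) (j, a))"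

definition measurement_scheme ::
  "('a::finite) op \<Rightarrow> ((('s::finite) \<times> 'a) op \<Rightarrow> ('s \<times> 'a) op) \<Rightarrow> ('x::finite \<Rightarrow> 'a op) \<Rightarrow> bool" where
  "measurement_scheme \<xi> Ech Z \<longleftrightarrow> is_state \<xi> \<and> channel Ech \<and>
     (\<forall>x. positive_op (Z x)) \<and> (\<lambda>i j. \<Sum>x\<in>UNIV. Z x i j) = idop"

definition third_law_scheme ::
  "('a::finite) op \<Rightarrow> ((('s::finite) \<times> 'a) op \<Rightarrow> ('s \<times> 'a) op) \<Rightarrow> ('x::finite \<Rightarrow> 'a op) \<Rightarrow> bool" where
  "third_law_scheme \<xi> Ech Z \<longleftrightarrow> measurement_scheme \<xi> Ech Z \<and>
     full_rank_state \<xi> \<and> third_law_channel Ech"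

definition implemented_instrument ::
  "('a::finite) op \<Rightarrow> ((('s::finite) \<times> 'a) op \<Rightarrow> ('s \<times> 'a) op) \<Rightarrow> ('x::finite \<Rightarrow> 'a op)
     \<Rightarrow> 'x \<Rightarrow> 's op \<Rightarrow> 's op" where
  "implemented_instrument \<xi> Ech Z x \<rho> =
     ptrace_A (mmult (tensor_op idop (Z x)) (Ech (tensor_op \<rho> \<xi>)))"

end

theory Submission
  imports Defs
begin

text \<open>Take \<open>x\<close> with \<open>E\<^sub>x\<close> not a multiple of the identity and any other outcome \<open>y\<close>, and feed
  the scheme the maximally mixed state \<open>\<rho>\<close>. The third law makes \<open>\<sigma> = Ech (\<rho> \<otimes> \<xi>)\<close> positive
  definite, and \<open>tr (E\<^sub>y I\<^sub>x(\<rho>)) = tr ((E\<^sub>y \<otimes> Z\<^sub>x) \<sigma>)\<close>. Since \<open>E\<^sub>y \<otimes> Z\<^sub>x\<close> is positive and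
  nonzero, writing it as \<open>\<Sum>\<^sub>k |z\<^sub>k\<rangle>\<langle>z\<^sub>k|\<close> shows that this trace is \<open>\<Sum>\<^sub>k \<langle>z\<^sub>k, \<sigma> z\<^sub>k\<rangle> > 0\<close>,
  whereas repeatability demands that it vanish. The decomposition of positive matrices is obtained
  by peeling off one column at a time (a Cholesky factorisation).\<close>

section \<open>Positive operators\<close>

lemma sesq_add_left: "sesq (\<lambda>i. u i + u' i) A w = sesq u A w + sesq u' A w"
  unfolding sesq_def by (simp add: ring_distribs sum.distrib)

lemma sesq_add_right: "sesq u A (\<lambda>i. w i + w' i) = sesq u A w + sesq u A w'"
  unfolding sesq_def by (simp add: ring_distribs sum.distrib)

lemma sesq_diff_op: "sesq v (\<lambda>i j. A i j - B i j) v = sesq v A v - sesq v B v"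
  unfolding sesq_def by (simp add: ring_distribs sum_subtractf)

lemma sesq_delta_left: "sesq (\<lambda>i. if i = s then t else 0) A w = cnj t * (\<Sum>j\<in>UNIV. A s j * w j)"
proof -
  have "sesq (\<lambda>i. if i = s then t else 0) A w
      = (\<Sum>i\<in>UNIV. if i = s then cnj t * (\<Sum>j\<in>UNIV. A s j * w j) else 0)"
    unfolding sesq_def by (rule sum.cong) (auto simp: sum_distrib_left mult.assoc)
  then show ?thesis by simp
qed

lemma sesq_delta_right: "sesq u A (\<lambda>j. if j = s then t else 0) = (\<Sum>i\<in>UNIV. cnj (u i) * A i s) * t"
proof -
  have "sesq u A (\<lambda>j. if j = s then t else 0) = (\<Sum>i\<in>UNIV. cnj (u i) * A i s * t)"
    unfolding sesq_def by (rule sum.cong) (auto simp: if_distrib cong: if_cong)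
  then show ?thesis by (simp add: sum_distrib_right)
qed

lemma sesq_delta_both:
  "sesq (\<lambda>i. if i = s then t else 0) A (\<lambda>j. if j = r then t' else 0) = cnj t * A s r * t'"
  by (simp add: sesq_delta_left if_distrib cong: if_cong)

lemma sesq_rank_one:
  "sesq v (\<lambda>i j. x i * cnj (y j) * c) v
     = (\<Sum>i\<in>UNIV. cnj (v i) * x i) * cnj (\<Sum>j\<in>UNIV. cnj (v j) * y j) * c"
proof -
  have "(\<Sum>i\<in>UNIV. cnj (v i) * x i) * cnj (\<Sum>j\<in>UNIV. cnj (v j) * y j) * c
      = (\<Sum>i\<in>UNIV. cnj (v i) * x i) * (\<Sum>j\<in>UNIV. v j * cnj (y j)) * c"
    by simp
  also have "\<dots> = (\<Sum>i\<in>UNIV. \<Sum>j\<in>UNIV. cnj (v i) * x i * (v j * cnj (y j)) * c)"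
    by (simp add: sum_distrib_left sum_distrib_right) (rule sum.swap)
  also have "\<dots> = sesq v (\<lambda>i j. x i * cnj (y j) * c) v"
    unfolding sesq_def by (intro sum.cong refl) (simp only: mult_ac)
  finally show ?thesis by simp
qed

lemma sesq_scaled_idop: "sesq v (\<lambda>i j. c * idop i j) v = c * of_real (\<Sum>i\<in>UNIV. (cmod (v i))\<^sup>2)"
proof -
  have "sesq v (\<lambda>i j. c * idop i j) v = (\<Sum>i\<in>UNIV. c * (cnj (v i) * v i))"
    unfolding sesq_def
  proof (intro sum.cong refl)
    fix i
    have "(\<Sum>j\<in>UNIV. cnj (v i) * (c * idop i j) * v j)
        = (\<Sum>j\<in>UNIV. if j = i then c * (cnj (v i) * v i) else 0)"
      by (intro sum.cong refl) (auto simp: idop_def)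
    then show "(\<Sum>j\<in>UNIV. cnj (v i) * (c * idop i j) * v j) = c * (cnj (v i) * v i)"
      by simp
  qed
  then show ?thesis
    by (simp add: sum_distrib_left of_real_sum complex_norm_square mult.commute flip: of_real_power)
qed

lemma positive_op_diag:
  assumes "positive_op A"
  shows "A i i = of_real (Re (A i i))" "0 \<le> Re (A i i)"
proof -
  have "sesq (\<lambda>k. if k = i then 1 else 0) A (\<lambda>k. if k = i then 1 else 0) = A i i"
    by (simp add: sesq_delta_both)
  with assms show "A i i = of_real (Re (A i i))" "0 \<le> Re (A i i)"
    unfolding positive_op_def by (metis complex_eq_iff Im_complex_of_real Re_complex_of_real)+
qed

lemma positive_op_hermitian:
  assumes "positive_op A"
  shows "A j i = cnj (A i j)"
proof (cases "i = j")
  case True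
  then show ?thesis using positive_op_diag(1)[OF assms, of i] by (metis complex_cnj_complex_of_real)
next
  case False
  define q where "q t = sesq (\<lambda>k. (if k = i then 1 else 0) + (if k = j then t else 0)) A
                              (\<lambda>k. (if k = i then 1 else 0) + (if k = j then t else 0))" for t
  have q: "q t = A i i + A i j * t + cnj t * A j i + cnj t * A j j * t" for t
    unfolding q_def by (simp add: sesq_add_left sesq_add_right sesq_delta_both)
  \<comment> \<open>reality of the quadratic form at \<open>t = 1\<close> and \<open>t = \<i>\<close> gives the real and imaginary parts\<close>
  have "Im (q 1) = 0" "Im (q \<i>) = 0"
    using assms unfolding positive_op_def q_def by blast+
  then show ?thesis
    using positive_op_diag(1)[OF assms, of i] positive_op_diag(1)[OF assms, of j]
    by (auto simp: q complex_eq_iff)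
qed

lemma sesq_shift_positive_op:
  fixes v :: "'n::finite \<Rightarrow> complex"
  assumes "positive_op A" "b = (\<Sum>i\<in>UNIV. cnj (v i) * A i s)"
  shows "sesq (\<lambda>i. v i + (if i = s then t else 0)) A (\<lambda>i. v i + (if i = s then t else 0))
     = sesq v A v + cnj t * cnj b + t * b + cnj t * t * A s s"
proof -
  have "(\<Sum>j\<in>UNIV. A s j * v j) = cnj b"
    by (simp add: assms(2) positive_op_hermitian[OF assms(1), of _ s] mult.commute)
  then show ?thesis
    by (simp add: assms(2) sesq_add_left sesq_add_right sesq_delta_both sesq_delta_left
        sesq_delta_right algebra_simps)
qed

lemma positive_op_zero_diag_imp_zero_col:
  assumes "positive_op A" "A s s = 0"
  shows "A i s = 0"
proof (rule ccontr)
  assume "A i s \<noteq> 0"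
  define t where "t = - of_real ((Re (A i i) + 1) / 2) / A i s"
  have tb: "t * A i s = - of_real ((Re (A i i) + 1) / 2)"
    using \<open>A i s \<noteq> 0\<close> by (simp add: t_def)
  have "A i s = (\<Sum>k\<in>UNIV. cnj (if k = i then 1 else 0) * A k s)"
    by (simp add: if_distrib[of cnj] if_distrib[of "\<lambda>z. z * _"] cong: if_cong)
  \<comment> \<open>along \<open>e\<^sub>i + t e\<^sub>s\<close> the quadratic form is affine in \<open>t\<close>, hence takes negative values\<close>
  from sesq_shift_positive_op[OF assms(1) this, of t]
  have "sesq (\<lambda>k. (if k = i then 1 else 0) + (if k = s then t else 0)) A
          (\<lambda>k. (if k = i then 1 else 0) + (if k = s then t else 0)) = A i i + cnj (t * A i s) + t * A i s"
    by (simp add: sesq_delta_both assms(2))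
  then have "Re (sesq (\<lambda>k. (if k = i then 1 else 0) + (if k = s then t else 0)) A
                (\<lambda>k. (if k = i then 1 else 0) + (if k = s then t else 0))) = -1"
    unfolding tb by simp
  moreover have "0 \<le> Re (sesq (\<lambda>k. (if k = i then 1 else 0) + (if k = s then t else 0)) A
                (\<lambda>k. (if k = i then 1 else 0) + (if k = s then t else 0)))"
    using assms(1) unfolding positive_op_def by blast
  ultimately show False
    by simp
qed

lemma positive_op_schur_complement:
  assumes "positive_op A" "0 < a" "A s s = of_real a"
  shows "positive_op (\<lambda>i j. A i j - A i s * cnj (A j s) / of_real a)"
  unfolding positive_op_def
proof
  fix v
  define b where "b = (\<Sum>i\<in>UNIV. cnj (v i) * A i s)"
  define t where "t = - cnj b / of_real a"
  have "cnj t * cnj b = - (b * cnj b / of_real a)" "t * b = - (b * cnj b / of_real a)"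
       "cnj t * t * A s s = b * cnj b / of_real a"
    using assms(2,3) by (simp_all add: t_def power2_eq_square field_simps)
  moreover have "(\<Sum>i\<in>UNIV. v i * cnj (A i s)) = cnj b"
    by (simp add: b_def)
  ultimately have "sesq v (\<lambda>i j. A i j - A i s * cnj (A j s) / of_real a) v
      = sesq (\<lambda>i. v i + (if i = s then t else 0)) A (\<lambda>i. v i + (if i = s then t else 0))"
    by (simp add: sesq_diff_op sesq_rank_one[where c = "1 / of_real a", simplified]
        sesq_shift_positive_op[OF assms(1) b_def] b_def[symmetric])
  then show "Im (sesq v (\<lambda>i j. A i j - A i s * cnj (A j s) / of_real a) v) = 0 \<and>
      0 \<le> Re (sesq v (\<lambda>i j. A i j - A i s * cnj (A j s) / of_real a) v)"
    using assms(1) unfolding positive_op_def by (simp only:)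
qed

text \<open>For \<open>A s s = 0\<close> division by zero gives \<open>w = 0\<close>, which is right: that column of \<open>A\<close> vanishes.\<close>

lemma positive_op_deflate:
  assumes "positive_op A" and w_def: "w = (\<lambda>i. A i s / of_real (sqrt (Re (A s s))))"
  shows "positive_op (\<lambda>i j. A i j - w i * cnj (w j))"
    and "A i s = w i * cnj (w s)"
    and "A s j = w s * cnj (w j)"
proof -
  define a where "a = Re (A s s)"
  have Ass: "A s s = of_real a" and "0 \<le> a"
    using positive_op_diag[OF assms(1), of s] by (simp_all add: a_def)
  have ww: "w i * cnj (w j) = A i s * cnj (A j s) / of_real a" for i j
  proof -
    have "of_real (sqrt a) * of_real (sqrt a) = (of_real a :: complex)"
      using \<open>0 \<le> a\<close> by (simp flip: of_real_mult)
    then show ?thesis by (simp add: w_def a_def)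
  qed
  show "positive_op (\<lambda>i j. A i j - w i * cnj (w j))"
  proof (cases "a = 0")
    case True
    then have "A i s = 0" for i
      using positive_op_zero_diag_imp_zero_col[OF assms(1)] Ass by simp
    then show ?thesis using assms(1) by (simp add: ww)
  next
    case False
    then show ?thesis
      using positive_op_schur_complement[OF assms(1) _ Ass] \<open>0 \<le> a\<close> by (simp add: ww)
  qed
  have col: "A i s = A i s * cnj (A s s) / of_real a" for i
    using positive_op_zero_diag_imp_zero_col[OF assms(1), of s i] by (cases "a = 0") (simp_all add: Ass)
  then show "A i s = w i * cnj (w s)"
    unfolding ww .
  have "A s j = cnj (A j s)"
    by (rule positive_op_hermitian[OF assms(1)])
  also have "\<dots> = cnj (A j s * cnj (A s s) / of_real a)"
    by (rule arg_cong[OF col])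
  also have "\<dots> = w s * cnj (w j)"
    by (simp add: ww Ass mult.commute)
  finally show "A s j = w s * cnj (w j)" .
qed

section \<open>Decomposition of positive operators\<close>

definition outer_sum :: "('k::finite \<Rightarrow> 'n \<Rightarrow> complex) \<Rightarrow> 'n op" where
  "outer_sum V = (\<lambda>i j. \<Sum>k\<in>UNIV. V k i * cnj (V k j))"

lemma sesq_sum_op: "sesq v (\<lambda>i j. \<Sum>k\<in>K. B k i j) w = (\<Sum>k\<in>K. sesq v (B k) w)"
proof -
  have "sesq v (\<lambda>i j. \<Sum>k\<in>K. B k i j) w = (\<Sum>i\<in>UNIV. \<Sum>j\<in>UNIV. \<Sum>k\<in>K. cnj (v i) * B k i j * w j)"
    unfolding sesq_def by (simp add: sum_distrib_left sum_distrib_right)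
  also have "\<dots> = (\<Sum>i\<in>UNIV. \<Sum>k\<in>K. \<Sum>j\<in>UNIV. cnj (v i) * B k i j * w j)"
    by (rule sum.cong[OF refl]) (rule sum.swap)
  also have "\<dots> = (\<Sum>k\<in>K. sesq v (B k) w)"
    unfolding sesq_def by (rule sum.swap)
  finally show ?thesis .
qed

lemma positive_op_outer_sum: "positive_op (outer_sum V)"
  unfolding positive_op_def
proof
  fix v
  have "sesq v (outer_sum V) v = (\<Sum>k\<in>UNIV. of_real ((cmod (\<Sum>i\<in>UNIV. cnj (v i) * V k i))\<^sup>2))"
    unfolding outer_sum_def sesq_sum_op complex_norm_square
    using sesq_rank_one[where c = 1 and x = "V _" and y = "V _"] by simp
  then show "Im (sesq v (outer_sum V) v) = 0 \<and> 0 \<le> Re (sesq v (outer_sum V) v)"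
    by (simp add: sum_nonneg del: of_real_power)
qed

lemma positive_op_outer_sum_on:
  fixes A :: "('n::finite) op"
  assumes "finite S" "positive_op A" "\<And>i j. i \<notin> S \<or> j \<notin> S \<Longrightarrow> A i j = 0"
  shows "\<exists>V::'n \<Rightarrow> 'n \<Rightarrow> complex. A = (\<lambda>i j. \<Sum>k\<in>S. V k i * cnj (V k j))"
  using assms
proof (induction S arbitrary: A rule: finite_induct)
  case empty
  then show ?case by (simp add: fun_eq_iff)
next
  case (insert s F)
  define w where "w = (\<lambda>i. A i s / of_real (sqrt (Re (A s s))))"
  define A' where "A' = (\<lambda>i j. A i j - w i * cnj (w j))"
  note deflate = positive_op_deflate[OF insert.prems(1) w_def]
  have A'_outside: "A' i j = 0" if outside: "i \<notin> F \<or> j \<notin> F" for i j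
  proof -
    consider "i = s" | "j = s" | "i \<notin> insert s F" | "j \<notin> insert s F"
      using outside by blast
    then show ?thesis
    proof cases
      case 1
      then show ?thesis by (simp add: A'_def deflate(3))
    next
      case 2
      then show ?thesis by (simp add: A'_def deflate(2))
    next
      case 3
      then show ?thesis by (simp add: A'_def w_def insert.prems(2))
    next
      case 4
      then show ?thesis by (simp add: A'_def w_def insert.prems(2))
    qed
  qed
  have "positive_op A'"
    unfolding A'_def by (rule deflate(1))
  from insert.IH[OF this A'_outside]
  obtain V where V: "A' = (\<lambda>i j. \<Sum>k\<in>F. V k i * cnj (V k j))"
    by blast
  have "A i j = (\<Sum>k\<in>insert s F. (V(s := w)) k i * cnj ((V(s := w)) k j))" for i j
  proof -
    have "A i j = w i * cnj (w j) + A' i j"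
      by (simp add: A'_def)
    also have "\<dots> = w i * cnj (w j) + (\<Sum>k\<in>F. (V(s := w)) k i * cnj ((V(s := w)) k j))"
      using V insert.hyps(2) by (auto intro: sum.cong)
    also have "\<dots> = (\<Sum>k\<in>insert s F. (V(s := w)) k i * cnj ((V(s := w)) k j))"
      using insert.hyps by simp
    finally show ?thesis .
  qed
  then show ?case by blast
qed

lemma positive_op_iff_outer_sum:
  fixes A :: "('n::finite) op"
  shows "positive_op A \<longleftrightarrow> (\<exists>V::'n \<Rightarrow> 'n \<Rightarrow> complex. A = outer_sum V)"
proof
  assume "positive_op A"
  then show "\<exists>V::'n \<Rightarrow> 'n \<Rightarrow> complex. A = outer_sum V"
    using positive_op_outer_sum_on[of UNIV A] unfolding outer_sum_def by simp
next
  assume "\<exists>V::'n \<Rightarrow> 'n \<Rightarrow> complex. A = outer_sum V"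
  then show "positive_op A"
    using positive_op_outer_sum by blast
qed

section \<open>Traces and tensor products\<close>

lemma sum_UNIV_prod:
  "(\<Sum>p\<in>(UNIV :: ('s::finite \<times> 'a::finite) set). f p) = (\<Sum>i\<in>UNIV. \<Sum>a\<in>UNIV. f (i, a))"
proof -
  have "(\<Sum>i\<in>UNIV. \<Sum>a\<in>UNIV. f (i, a)) = (\<Sum>(i, a)\<in>UNIV \<times> UNIV. f (i, a))"
    by (rule sum.cartesian_product)
  then show ?thesis
    by (simp add: split_def)
qed

lemma trace_mmult: "trace (mmult A B) = (\<Sum>i\<in>UNIV. \<Sum>j\<in>UNIV. A i j * B j i)"
  by (simp add: trace_def mmult_def)

lemma trace_mmult_outer_sum: "trace (mmult (outer_sum V) \<sigma>) = (\<Sum>k\<in>UNIV. sesq (V k) \<sigma> (V k))"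
proof -
  have "trace (mmult (outer_sum V) \<sigma>) = (\<Sum>i\<in>UNIV. \<Sum>j\<in>UNIV. \<Sum>k\<in>UNIV. V k i * cnj (V k j) * \<sigma> j i)"
    by (simp add: trace_mmult outer_sum_def sum_distrib_right)
  also have "\<dots> = (\<Sum>i\<in>UNIV. \<Sum>k\<in>UNIV. \<Sum>j\<in>UNIV. V k i * cnj (V k j) * \<sigma> j i)"
    by (rule sum.cong[OF refl]) (rule sum.swap)
  also have "\<dots> = (\<Sum>k\<in>UNIV. \<Sum>i\<in>UNIV. \<Sum>j\<in>UNIV. V k i * cnj (V k j) * \<sigma> j i)"
    by (rule sum.swap)
  also have "\<dots> = (\<Sum>k\<in>UNIV. \<Sum>j\<in>UNIV. \<Sum>i\<in>UNIV. V k i * cnj (V k j) * \<sigma> j i)"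
    by (rule sum.cong[OF refl]) (rule sum.swap)
  also have "\<dots> = (\<Sum>k\<in>UNIV. sesq (V k) \<sigma> (V k))"
    by (simp add: sesq_def mult_ac)
  finally show ?thesis .
qed

lemma trace_mmult_posdef_pos:
  fixes M :: "('n::finite) op"
  assumes "positive_op M" "M \<noteq> (\<lambda>_ _. 0)" "posdef_op \<sigma>"
  shows "0 < Re (trace (mmult M \<sigma>))"
proof -
  obtain V :: "'n \<Rightarrow> 'n \<Rightarrow> complex" where M: "M = outer_sum V"
    using assms(1) positive_op_iff_outer_sum by blast
  have "\<exists>k. V k \<noteq> (\<lambda>_. 0)"
  proof (rule ccontr)
    assume "\<nexists>k. V k \<noteq> (\<lambda>_. 0)"
    then have "M = (\<lambda>_ _. 0)"
      by (simp add: M outer_sum_def)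
    with assms(2) show False ..
  qed
  then obtain k where "V k \<noteq> (\<lambda>_. 0)" ..
  then have "0 < Re (sesq (V k) \<sigma> (V k))"
    using assms(3) unfolding posdef_op_def by blast
  moreover have "0 \<le> Re (sesq (V l) \<sigma> (V l))" for l
    using assms(3) unfolding posdef_op_def positive_op_def by blast
  ultimately have "0 < (\<Sum>l\<in>UNIV. Re (sesq (V l) \<sigma> (V l)))"
    by (intro sum_pos2[of UNIV k]) auto
  then show ?thesis
    by (simp add: M trace_mmult_outer_sum)
qed

lemma tensor_op_outer_sum:
  fixes U :: "'k::finite \<Rightarrow> 's::finite \<Rightarrow> complex" and W :: "'l::finite \<Rightarrow> 'a::finite \<Rightarrow> complex"
  shows "tensor_op (outer_sum U) (outer_sum W) = outer_sum (\<lambda>(k, l) (i, a). U k i * W l a)"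
proof (intro ext)
  fix p q :: "'s \<times> 'a"
  obtain i a j b where p: "p = (i, a)" and q: "q = (j, b)"
    by fastforce
  have "outer_sum (\<lambda>(k, l) (i, a). U k i * W l a) p q
      = (\<Sum>k\<in>UNIV. \<Sum>l\<in>UNIV. (U k i * cnj (U k j)) * (W l a * cnj (W l b)))"
    unfolding outer_sum_def sum_UNIV_prod p q by (simp add: mult_ac)
  also have "\<dots> = tensor_op (outer_sum U) (outer_sum W) p q"
    by (simp add: tensor_op_def outer_sum_def p q sum_product)
  finally show "tensor_op (outer_sum U) (outer_sum W) p q = outer_sum (\<lambda>(k, l) (i, a). U k i * W l a) p q"
    by simp
qed

lemma positive_op_tensor_op:
  fixes A :: "('s::finite) op" and B :: "('a::finite) op"
  assumes "positive_op A" "positive_op B"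
  shows "positive_op (tensor_op A B)"
proof -
  obtain U :: "'s \<Rightarrow> 's \<Rightarrow> complex" where "A = outer_sum U"
    using assms(1) unfolding positive_op_iff_outer_sum ..
  moreover obtain W :: "'a \<Rightarrow> 'a \<Rightarrow> complex" where "B = outer_sum W"
    using assms(2) unfolding positive_op_iff_outer_sum ..
  ultimately show ?thesis
    by (simp add: tensor_op_outer_sum positive_op_outer_sum)
qed

lemma tensor_op_nonzero:
  assumes "A \<noteq> (\<lambda>_ _. 0)" "B \<noteq> (\<lambda>_ _. 0)"
  shows "tensor_op A B \<noteq> (\<lambda>_ _. 0)"
proof -
  obtain i j a b where "A i j \<noteq> 0" "B a b \<noteq> 0"
    using assms by (auto simp: fun_eq_iff)
  then have "tensor_op A B (i, a) (j, b) \<noteq> 0"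
    by (simp add: tensor_op_def)
  then show ?thesis by auto
qed

lemma trace_mmult_ptrace_A:
  fixes E :: "('s::finite) op" and Z :: "('a::finite) op" and \<sigma> :: "('s \<times> 'a) op"
  shows "trace (mmult E (ptrace_A (mmult (tensor_op idop Z) \<sigma>))) = trace (mmult (tensor_op E Z) \<sigma>)"
proof -
  have ptrace: "ptrace_A (mmult (tensor_op idop Z) \<sigma>) j i = (\<Sum>a\<in>UNIV. \<Sum>b\<in>UNIV. Z a b * \<sigma> (j, b) (i, a))" for j i
  proof -
    have "ptrace_A (mmult (tensor_op idop Z) \<sigma>) j i
        = (\<Sum>a\<in>UNIV. \<Sum>k\<in>UNIV. if k = j then \<Sum>b\<in>UNIV. Z a b * \<sigma> (k, b) (i, a) else 0)"
      unfolding ptrace_A_def mmult_def tensor_op_def sum_UNIV_prod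
      by (intro sum.cong refl) (auto simp: idop_def)
    then show ?thesis by simp
  qed
  have "trace (mmult E (ptrace_A (mmult (tensor_op idop Z) \<sigma>)))
      = (\<Sum>i\<in>UNIV. \<Sum>j\<in>UNIV. \<Sum>a\<in>UNIV. \<Sum>b\<in>UNIV. E i j * Z a b * \<sigma> (j, b) (i, a))"
    by (simp add: trace_mmult ptrace sum_distrib_left mult.assoc)
  also have "\<dots> = (\<Sum>i\<in>UNIV. \<Sum>a\<in>UNIV. \<Sum>j\<in>UNIV. \<Sum>b\<in>UNIV. E i j * Z a b * \<sigma> (j, b) (i, a))"
    by (rule sum.cong[OF refl]) (rule sum.swap)
  also have "\<dots> = trace (mmult (tensor_op E Z) \<sigma>)"
    by (simp add: trace_mmult sum_UNIV_prod tensor_op_def)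
  finally show ?thesis .
qed

section \<open>The maximally mixed state\<close>

definition maximally_mixed :: "('n::finite) op" where
  "maximally_mixed = (\<lambda>i j. of_real (1 / real (card (UNIV :: 'n set))) * idop i j)"

lemma trace_tensor_op: "trace (tensor_op A B) = trace A * trace B"
  by (simp add: trace_def tensor_op_def sum_UNIV_prod sum_product)

lemma sesq_tensor_op_scaled_idop:
  fixes v :: "('s::finite \<times> 'a::finite) \<Rightarrow> complex"
  shows "sesq v (tensor_op (\<lambda>i j. c * idop i j) B) v = c * (\<Sum>i\<in>UNIV. sesq (\<lambda>a. v (i, a)) B (\<lambda>a. v (i, a)))"
proof -
  have "sesq v (tensor_op (\<lambda>i j. c * idop i j) B) v
      = (\<Sum>i\<in>UNIV. \<Sum>a\<in>UNIV. \<Sum>j\<in>UNIV. if j = i then \<Sum>b\<in>UNIV. c * (cnj (v (i, a)) * B a b * v (i, b)) else 0)"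
    unfolding sesq_def tensor_op_def sum_UNIV_prod
    by (intro sum.cong refl) (auto simp: idop_def sum_distrib_left mult_ac)
  also have "\<dots> = c * (\<Sum>i\<in>UNIV. sesq (\<lambda>a. v (i, a)) B (\<lambda>a. v (i, a)))"
    by (simp add: sesq_def sum_distrib_left)
  finally show ?thesis .
qed

lemma full_rank_state_maximally_mixed: "full_rank_state (maximally_mixed :: ('n::finite) op)"
proof -
  have c: "0 < 1 / real (card (UNIV :: 'n set))"
    by (simp add: finite_UNIV_card_ge_0)
  have "0 < (\<Sum>i\<in>UNIV. (cmod (v i))\<^sup>2)" if nonzero: "v \<noteq> (\<lambda>_. 0)" for v :: "'n \<Rightarrow> complex"
  proof -
    obtain i where "v i \<noteq> 0"
      using nonzero by auto
    then show ?thesis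
      by (intro sum_pos2[of UNIV i]) auto
  qed
  then have "posdef_op (maximally_mixed :: 'n op)"
    using c unfolding posdef_op_def positive_op_def maximally_mixed_def sesq_scaled_idop
    by (simp add: sum_nonneg)
  moreover have "trace (maximally_mixed :: 'n op) = 1"
    by (simp add: trace_def maximally_mixed_def idop_def)
  ultimately show ?thesis
    unfolding full_rank_state_def is_state_def posdef_op_def by blast
qed

lemma full_rank_state_tensor_maximally_mixed:
  fixes \<xi> :: "('a::finite) op"
  assumes "full_rank_state \<xi>"
  shows "full_rank_state (tensor_op (maximally_mixed :: ('s::finite) op) \<xi>)"
proof -
  have \<xi>: "posdef_op \<xi>" "positive_op \<xi>" "trace \<xi> = 1"
    using assms unfolding full_rank_state_def is_state_def posdef_op_def by auto
  have \<rho>: "positive_op (maximally_mixed :: 's op)" "trace (maximally_mixed :: 's op) = 1"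
    using full_rank_state_maximally_mixed unfolding full_rank_state_def is_state_def by auto
  have "0 < Re (sesq v (tensor_op (maximally_mixed :: 's op) \<xi>) v)" if nonzero: "v \<noteq> (\<lambda>_. 0)" for v
  proof -
    obtain i a where "v (i, a) \<noteq> 0"
      using nonzero by (auto simp: fun_eq_iff)
    then have "0 < Re (sesq (\<lambda>a. v (i, a)) \<xi> (\<lambda>a. v (i, a)))"
      using \<xi>(1) unfolding posdef_op_def by (metis (mono_tags))
    moreover have "0 \<le> Re (sesq (\<lambda>a. v (k, a)) \<xi> (\<lambda>a. v (k, a)))" for k
      using \<xi>(2) unfolding positive_op_def by blast
    ultimately have "0 < (\<Sum>k\<in>UNIV. Re (sesq (\<lambda>a. v (k, a)) \<xi> (\<lambda>a. v (k, a))))"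
      by (intro sum_pos2[of UNIV i]) auto
    then show ?thesis
      unfolding maximally_mixed_def sesq_tensor_op_scaled_idop by (simp add: finite_UNIV_card_ge_0)
  qed
  with positive_op_tensor_op[OF \<rho>(1) \<xi>(2)] show ?thesis
    unfolding full_rank_state_def is_state_def posdef_op_def by (simp add: trace_tensor_op \<rho>(2) \<xi>(3))
qed

lemma observable_other_outcome:
  assumes "observable E" "\<nexists>c. E x = (\<lambda>i j. c * idop i j)"
  obtains y where "y \<noteq> x"
proof -
  have "UNIV \<noteq> {x}"
  proof
    assume "UNIV = {x}"
    then have "E x = (\<lambda>i j. 1 * idop i j)"
      using assms(1) unfolding observable_def \<open>UNIV = {x}\<close> by simp
    with assms(2) show False
      by blast
  qed
  then show ?thesis
    using that by blast
qed

lemma implemented_instrument_pointer_nonzero: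
  fixes E :: "'x::finite \<Rightarrow> ('s::finite) op" and Z :: "'x \<Rightarrow> ('a::finite) op"
  assumes "observable E" "E_instrument E (implemented_instrument \<xi> Ech Z)"
  shows "Z x \<noteq> (\<lambda>_ _. 0)"
proof
  assume "Z x = (\<lambda>_ _. 0)"
  then have "trace (implemented_instrument \<xi> Ech Z x maximally_mixed) = 0"
    by (simp add: implemented_instrument_def trace_def ptrace_A_def mmult_def tensor_op_def split_def)
  moreover have "trace (implemented_instrument \<xi> Ech Z x maximally_mixed) = trace (mmult (E x) maximally_mixed)"
    using assms(2) full_rank_state_maximally_mixed unfolding E_instrument_def full_rank_state_def by blast
  moreover have "0 < Re (trace (mmult (E x) (maximally_mixed :: 's op)))"
    using assms(1) full_rank_state_maximally_mixed
    unfolding observable_def full_rank_state_def by (intro trace_mmult_posdef_pos) auto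
  ultimately show False
    by simp
qed

theorem theorem3:
  fixes E :: "'x::finite \<Rightarrow> ('s::finite) op"
    and \<xi> :: "('a::finite) op"
    and Ech :: "('s \<times> 'a) op \<Rightarrow> ('s \<times> 'a) op"
    and Z :: "'x \<Rightarrow> 'a op"
  assumes "card (UNIV :: 's set) \<ge> 2"
    and "observable E"
    and "nontrivial_observable E"
    and "third_law_scheme \<xi> Ech Z"
    and "E_instrument E (implemented_instrument \<xi> Ech Z)"
  shows "\<not> repeatable E (implemented_instrument \<xi> Ech Z)"
proof
  assume repeatable: "repeatable E (implemented_instrument \<xi> Ech Z)"
  obtain x where "\<nexists>c. E x = (\<lambda>i j. c * idop i j)"
    using assms(3) unfolding nontrivial_observable_def by blast
  with assms(2) obtain y where "y \<noteq> x"
    by (rule observable_other_outcome)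
  define \<rho> :: "'s op" where "\<rho> = maximally_mixed"
  have "posdef_op (Ech (tensor_op \<rho> \<xi>))"
    using assms(4) full_rank_state_tensor_maximally_mixed unfolding \<rho>_def third_law_scheme_def
      third_law_channel_def full_rank_state_def by blast
  then have "0 < Re (trace (mmult (E y) (implemented_instrument \<xi> Ech Z x \<rho>)))"
    using assms(2,4) implemented_instrument_pointer_nonzero[OF assms(2,5)]
    unfolding implemented_instrument_def trace_mmult_ptrace_A observable_def third_law_scheme_def
      measurement_scheme_def
    by (intro trace_mmult_posdef_pos positive_op_tensor_op tensor_op_nonzero) auto
  moreover have "is_state \<rho>"
    using full_rank_state_maximally_mixed unfolding \<rho>_def full_rank_state_def by blast
  ultimately show False
    using repeatable \<open>y \<noteq> x\<close> unfolding repeatable_def by auto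
qed

end
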